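(* Let $p\in[1,\infty)$, $q\in[1,\infty]$, $c\in\mathbb{R}$, and let $\{A_i\}_{i=1}^\infty$, $A_i$ a $P$-operator on $\Omega_i$, be a sequence with $\sup_i\|A_i\|_{p\to q}<\infty$ converging to a $P$-operator $A$ on $\Omega$ (i.e. $d_M(A_i,A)\to0$). Then: (1) if every $A_i$ is positivity-preserving, then $A$ is positivity-preserving; (2) if every $A_i$ is $c$-regular, then $A$ is $c$-regular.
   Context: A $P$-operator on a probability space $\Omega$ is a linear $A:L^\infty(\Omega)\to L^1(\Omega)$, $v\mapsto vA$, with $\|A\|_{\infty\to1}<\infty$, where $\|A\|_{p\to q}=\sup_{v\in L^\infty}\|vA\|_q/\|v\|_p$. $A$ is positivity-preserving if $v\ge0$ a.e. implies $vA\ge0$ a.e.; $A$ is $c$-regular if $1_\Omega A=c1_\Omega$. $\mathcal{S}_k(A)$ is the set of joint distributions on $\mathbb{R}^{2k}$ of $(v_1,\dots,v_k,v_1A,\dots,v_kA)$ over measurable $v_i:\Omega\to[-1,1]$; $d_M(A,B)=\sum_k2^{-k}d_H(\mathcal{S}_k(A),\mathcal{S}_k(B))$ with $d_H$ the Hausdorff distance induced by the Lévy–Prokhorov metric. *)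

theory Defs
  imports "HOL-Probability.Probability"
begin

definition lp_norm :: "'a measure \<Rightarrow> ennreal \<Rightarrow> ('a \<Rightarrow> real) \<Rightarrow> ennreal" where
  "lp_norm M p f =
     (if p = \<infinity> then esssup M (\<lambda>x. ennreal \<bar>f x\<bar>)
      else (let r = enn2real p; I = (\<integral>\<^sup>+ x. ennreal (\<bar>f x\<bar> powr r) \<partial>M)
            in if I = \<infinity> then \<infinity> else ennreal (enn2real I powr (1 / r))))"

text \<open>Representatives of elements of L^\<infinity>: bounded measurable functions.\<close>
definition bounded_meas :: "'a measure \<Rightarrow> ('a \<Rightarrow> real) \<Rightarrow> bool" where
  "bounded_meas M v \<longleftrightarrow> v \<in> borel_measurable M \<and> (\<exists>C. \<forall>x\<in>space M. \<bar>v x\<bar> \<le> C)"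

text \<open>Operator norm \<open>\<parallel>A\<parallel>_{p\<rightarrow>q} = sup over v in L^\<infinity> of \<parallel>vA\<parallel>_q / \<parallel>v\<parallel>_p\<close>
  (v with \<parallel>v\<parallel>_p = 0, i.e. v = 0 a.e., are omitted; for them vA = 0 a.e.).\<close>
definition op_norm :: "'a measure \<Rightarrow> (('a \<Rightarrow> real) \<Rightarrow> ('a \<Rightarrow> real)) \<Rightarrow> ennreal \<Rightarrow> ennreal \<Rightarrow> ennreal" where
  "op_norm M A p q =
     (SUP v \<in> {v. bounded_meas M v \<and> lp_norm M p v \<noteq> 0}. lp_norm M q (A v) / lp_norm M p v)"

text \<open>A P-operator: a linear map L^\<infinity>(M) \<rightarrow> L^1(M), represented on functions,
  well-defined on a.e.-classes, linear a.e., with finite \<infinity>\<rightarrow>1 norm.\<close>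
definition P_operator :: "'a measure \<Rightarrow> (('a \<Rightarrow> real) \<Rightarrow> ('a \<Rightarrow> real)) \<Rightarrow> bool" where
  "P_operator M A \<longleftrightarrow> prob_space M
     \<and> (\<forall>v. bounded_meas M v \<longrightarrow> integrable M (A v))
     \<and> (\<forall>v w. bounded_meas M v \<longrightarrow> bounded_meas M w \<longrightarrow> (AE x in M. v x = w x)
              \<longrightarrow> (AE x in M. A v x = A w x))
     \<and> (\<forall>v w (a::real) (b::real). bounded_meas M v \<longrightarrow> bounded_meas M w \<longrightarrow>
              (AE x in M. A (\<lambda>y. a * v y + b * w y) x = a * A v x + b * A w x))
     \<and> op_norm M A \<infinity> 1 < \<infinity>"

definition positivity_preserving :: "'a measure \<Rightarrow> (('a \<Rightarrow> real) \<Rightarrow> ('a \<Rightarrow> real)) \<Rightarrow> bool" where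
  "positivity_preserving M A \<longleftrightarrow>
     (\<forall>v. bounded_meas M v \<longrightarrow> (AE x in M. v x \<ge> 0) \<longrightarrow> (AE x in M. A v x \<ge> 0))"

definition c_regular :: "real \<Rightarrow> 'a measure \<Rightarrow> (('a \<Rightarrow> real) \<Rightarrow> ('a \<Rightarrow> real)) \<Rightarrow> bool" where
  "c_regular c M A \<longleftrightarrow> (AE x in M. A (\<lambda>_. 1) x = c)"

section \<open>R^n as extensional functions on {..<n}; Levy--Prokhorov metric\<close>

abbreviation Rn :: "nat \<Rightarrow> (nat \<Rightarrow> real) measure" where
  "Rn n \<equiv> PiM {..<n} (\<lambda>_. borel)"

definition edist :: "nat \<Rightarrow> (nat \<Rightarrow> real) \<Rightarrow> (nat \<Rightarrow> real) \<Rightarrow> real" where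
  "edist n x y = sqrt (\<Sum>i<n. (x i - y i)\<^sup>2)"

definition thick :: "nat \<Rightarrow> real \<Rightarrow> (nat \<Rightarrow> real) set \<Rightarrow> (nat \<Rightarrow> real) set" where
  "thick n e B = {y \<in> space (Rn n). \<exists>x\<in>B. edist n x y < e}"

definition lp_dist :: "nat \<Rightarrow> (nat \<Rightarrow> real) measure \<Rightarrow> (nat \<Rightarrow> real) measure \<Rightarrow> real" where
  "lp_dist n \<mu> \<nu> = Inf {e. e > 0 \<and> (\<forall>B \<in> sets (Rn n).
      measure \<mu> B \<le> measure \<nu> (thick n e B) + e \<and> measure \<nu> B \<le> measure \<mu> (thick n e B) + e)}"

definition hausdorff_lp :: "nat \<Rightarrow> (nat \<Rightarrow> real) measure set \<Rightarrow> (nat \<Rightarrow> real) measure set \<Rightarrow> real" where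
  "hausdorff_lp n X Y = max (SUP \<mu>\<in>X. INF \<nu>\<in>Y. lp_dist n \<mu> \<nu>) (SUP \<nu>\<in>Y. INF \<mu>\<in>X. lp_dist n \<mu> \<nu>)"

text \<open>\<open>S_k(A)\<close>: joint distributions of (v_1..v_k, v_1A..v_kA) on R^{2k}; coordinate j<k is v_{j+1},
  coordinate k+j is v_{j+1}A.\<close>
definition S_k :: "'a measure \<Rightarrow> (('a \<Rightarrow> real) \<Rightarrow> ('a \<Rightarrow> real)) \<Rightarrow> nat \<Rightarrow> (nat \<Rightarrow> real) measure set" where
  "S_k M A k = {distr M (Rn (2 * k))
        (\<lambda>x. \<lambda>j\<in>{..<2 * k}. if j < k then v j x else A (v (j - k)) x)
      | v. \<forall>j<k. v j \<in> borel_measurable M \<and> (\<forall>x\<in>space M. v j x \<in> {-1..1})}"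

definition action_dist :: "'a measure \<Rightarrow> (('a \<Rightarrow> real) \<Rightarrow> ('a \<Rightarrow> real))
    \<Rightarrow> 'b measure \<Rightarrow> (('b \<Rightarrow> real) \<Rightarrow> ('b \<Rightarrow> real)) \<Rightarrow> real" where
  "action_dist M A N B = (\<Sum>k. (1/2) ^ Suc k * hausdorff_lp (2 * Suc k) (S_k M A (Suc k)) (S_k N B (Suc k)))"

end

(*
  Both properties say that an operator maps measurable W-valued inputs to outputs with
  \<rho> \<le> 0 almost everywhere: positivity preservation with W = [0,1] and \<rho> a = -a (after
  rescaling the input), c-regularity with W = {1} and \<rho> a = |a - c|. Such a constraint passes
  to d_M-limits. Suppose \<rho>(A w) \<ge> \<delta> on a set of measure \<eta> > 0 for a W-valued w. For large i the
  first term of d_M(A_i, A) provides u on \<Omega>_i such that the joint law of (u, A_i u) is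
  Levy-Prokhorov close to that of (w, A w): so u is W-valued outside a set of small measure,
  while \<rho>(A_i u) > \<delta>/2 on a set of measure close to \<eta>. Write u = r \<circ> u + (u - r \<circ> u) with r
  a nearest-point retraction onto W. The first part is mapped to \<rho> \<le> 0; the second is bounded
  and small in measure, hence small in L^p, and the uniform p \<rightarrow> q bound together with
  Chebyshev's inequality makes its image small in measure, contradicting \<rho>(A_i u) > \<delta>/2.
*)

theory Submission
  imports Defs
begin

section \<open>L^p norms on probability spaces\<close>

lemma enn2real_ge_1: "1 \<le> p \<Longrightarrow> p < \<infinity> \<Longrightarrow> 1 \<le> enn2real p"
  by (cases p rule: ennreal_cases) (auto simp: ennreal_le_iff2)

lemma lp_norm_finite_exponent:
  "p \<noteq> \<infinity> \<Longrightarrow> lp_norm M p f =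
    (if (\<integral>\<^sup>+ x. ennreal (\<bar>f x\<bar> powr enn2real p) \<partial>M) = \<infinity> then \<infinity>
     else ennreal (enn2real (\<integral>\<^sup>+ x. ennreal (\<bar>f x\<bar> powr enn2real p) \<partial>M) powr (1 / enn2real p)))"
  by (simp add: lp_norm_def Let_def)

lemma lp_norm_le_if_nn_integral_le:
  assumes "1 \<le> p" "p < \<infinity>" "K \<ge> 0"
    and "(\<integral>\<^sup>+ x. ennreal (\<bar>f x\<bar> powr enn2real p) \<partial>M) \<le> ennreal (K powr enn2real p)"
  shows "lp_norm M p f \<le> ennreal K"
proof -
  define r where "r = enn2real p"
  define I where "I = (\<integral>\<^sup>+ x. ennreal (\<bar>f x\<bar> powr r) \<partial>M)"
  have r1: "1 \<le> r"
    using enn2real_ge_1 assms(1,2) by (simp add: r_def)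
  have "I \<noteq> \<infinity>"
    using assms(4) by (auto simp: I_def r_def top_unique)
  moreover have "enn2real I \<le> K powr r"
    using assms(4) by (simp add: I_def r_def enn2real_leI)
  then have "enn2real I powr (1 / r) \<le> (K powr r) powr (1 / r)"
    using r1 by (intro powr_mono2) auto
  ultimately show ?thesis
    using assms(2,3) r1 by (simp add: lp_norm_finite_exponent I_def r_def powr_powr ennreal_leI)
qed

lemma nn_integral_le_if_lp_norm_le:
  assumes "1 \<le> p" "p < \<infinity>" "K \<ge> 0" "lp_norm M p f \<le> ennreal K"
  shows "(\<integral>\<^sup>+ x. ennreal (\<bar>f x\<bar> powr enn2real p) \<partial>M) \<le> ennreal (K powr enn2real p)"
proof -
  define r where "r = enn2real p"
  define I where "I = (\<integral>\<^sup>+ x. ennreal (\<bar>f x\<bar> powr r) \<partial>M)"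
  have r1: "1 \<le> r"
    using enn2real_ge_1 assms(1,2) by (simp add: r_def)
  have fin: "I \<noteq> \<infinity>"
    using assms(2,4) by (auto simp: lp_norm_finite_exponent I_def r_def top_unique)
  then have "enn2real I powr (1 / r) \<le> K"
    using assms(2-4) by (simp add: lp_norm_finite_exponent I_def r_def)
  then have "(enn2real I powr (1 / r)) powr r \<le> K powr r"
    using r1 by (intro powr_mono2) auto
  then have "enn2real I \<le> K powr r"
    using r1 by (simp add: powr_powr)
  then have "ennreal (enn2real I) \<le> ennreal (K powr r)"
    by (rule ennreal_leI)
  moreover have "ennreal (enn2real I) = I"
    using fin by (simp add: less_top)
  ultimately have "I \<le> ennreal (K powr r)"
    by simp
  then show ?thesis
    by (simp only: I_def r_def)
qed

lemma lp_norm_eq_0_if_AE_zero: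
  assumes "f \<in> borel_measurable M" "AE x in M. f x = 0"
  shows "lp_norm M p f = 0"
proof (cases "p = \<infinity>")
  case True
  have "esssup M (\<lambda>x. ennreal \<bar>f x\<bar>) \<le> 0"
    using assms by (intro esssup_I) (auto elim: eventually_mono)
  then show ?thesis
    using True by (simp add: lp_norm_def)
next
  case False
  have "(\<integral>\<^sup>+ x. ennreal (\<bar>f x\<bar> powr enn2real p) \<partial>M) = (\<integral>\<^sup>+ x. 0 \<partial>M)"
    using assms(2) by (intro nn_integral_cong_AE) (auto elim: eventually_mono)
  then show ?thesis
    using False by (simp add: lp_norm_finite_exponent)
qed

lemma AE_zero_if_lp_norm_eq_0:
  assumes "1 \<le> p" "p < \<infinity>" "f \<in> borel_measurable M" "lp_norm M p f = 0"
  shows "AE x in M. f x = 0"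
proof -
  define I where "I = (\<integral>\<^sup>+ x. ennreal (\<bar>f x\<bar> powr enn2real p) \<partial>M)"
  have "I \<noteq> \<infinity>" "enn2real I powr (1 / enn2real p) = 0"
    using assms(2,4) by (auto simp: lp_norm_finite_exponent I_def split: if_splits)
  then have "I = 0"
    by (simp add: enn2real_eq_0_iff)
  then have "AE x in M. ennreal (\<bar>f x\<bar> powr enn2real p) = 0"
    unfolding I_def using assms(3) by (subst (asm) nn_integral_0_iff_AE) auto
  then show ?thesis
    by eventually_elim simp
qed

lemma emeasure_abs_ge_le_nn_integral_powr:
  assumes "f \<in> borel_measurable M" "t > 0" "s \<ge> 0"
  shows "ennreal (t powr s) * emeasure M {x\<in>space M. t \<le> \<bar>f x\<bar>}
    \<le> (\<integral>\<^sup>+ x. ennreal (\<bar>f x\<bar> powr s) \<partial>M)"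
proof -
  define S where "S = {x\<in>space M. t \<le> \<bar>f x\<bar>}"
  have "S \<in> sets M"
    using assms(1) unfolding S_def by measurable
  then have "ennreal (t powr s) * emeasure M S = (\<integral>\<^sup>+ x. ennreal (t powr s) * indicator S x \<partial>M)"
    by (simp add: nn_integral_cmult_indicator)
  also have "\<dots> \<le> (\<integral>\<^sup>+ x. ennreal (\<bar>f x\<bar> powr s) \<partial>M)"
    using assms(2,3) by (intro nn_integral_mono) (auto simp: S_def indicator_def intro!: ennreal_leI powr_mono2)
  finally show ?thesis
    by (simp add: S_def)
qed

lemma measure_abs_ge_less_if_lp_norm_le:
  assumes "1 \<le> q" "t > 0" "\<eta> > 0"
  obtains K where "K > 0" "\<And>(M::'a measure) f. prob_space M \<Longrightarrow> f \<in> borel_measurable M \<Longrightarrow>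
      lp_norm M q f \<le> ennreal K \<Longrightarrow> measure M {x\<in>space M. t \<le> \<bar>f x\<bar>} < \<eta>"
proof (cases "q = \<infinity>")
  case True
  show ?thesis
  proof (rule that[of "t / 2"])
    fix M :: "'a measure" and f
    assume "lp_norm M q f \<le> ennreal (t / 2)"
    then have "esssup M (\<lambda>x. ennreal \<bar>f x\<bar>) \<le> ennreal (t / 2)"
      using True by (simp add: lp_norm_def)
    then have "AE x in M. ennreal \<bar>f x\<bar> \<le> ennreal (t / 2)"
      using esssup_AE[of "\<lambda>x. ennreal \<bar>f x\<bar>" M] by (auto elim: eventually_mono)
    then have "AE x in M. \<not> t \<le> \<bar>f x\<bar>"
      using assms(2) by (auto elim!: eventually_mono simp: ennreal_le_iff)
    then show "measure M {x\<in>space M. t \<le> \<bar>f x\<bar>} < \<eta>"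
      using assms(3) by (simp add: measure_def emeasure_eq_0_AE)
  qed (use assms(2) in simp)
next
  case False
  define s where "s = enn2real q"
  have s1: "1 \<le> s"
    using enn2real_ge_1 assms(1) False by (simp add: s_def less_top)
  show ?thesis
  proof (rule that[of "t * (\<eta> / 2) powr (1 / s)"])
    fix M :: "'a measure" and f
    assume M: "prob_space M" and f: "f \<in> borel_measurable M"
      and L: "lp_norm M q f \<le> ennreal (t * (\<eta> / 2) powr (1 / s))"
    have "(\<integral>\<^sup>+ x. ennreal (\<bar>f x\<bar> powr s) \<partial>M) \<le> ennreal ((t * (\<eta> / 2) powr (1 / s)) powr s)"
      using nn_integral_le_if_lp_norm_le[OF assms(1) _ _ L] False assms(2,3) by (simp add: s_def less_top)
    also have "(t * (\<eta> / 2) powr (1 / s)) powr s = t powr s * (\<eta> / 2)"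
      using s1 assms(2,3) by (simp add: powr_mult powr_powr)
    finally have "ennreal (t powr s) * emeasure M {x\<in>space M. t \<le> \<bar>f x\<bar>} \<le> ennreal (t powr s * (\<eta> / 2))"
      using emeasure_abs_ge_le_nn_integral_powr[OF f assms(2), of s] s1 by simp
    then have "t powr s * measure M {x\<in>space M. t \<le> \<bar>f x\<bar>} \<le> t powr s * (\<eta> / 2)"
      using assms(2,3) by (simp add: finite_measure.emeasure_eq_measure[OF prob_space.finite_measure[OF M]] ennreal_mult[symmetric] ennreal_le_iff)
    then show "measure M {x\<in>space M. t \<le> \<bar>f x\<bar>} < \<eta>"
      using assms(2,3) by simp
  qed (use assms(2,3) in simp)
qed

lemma nn_integral_powr_le_split:
  assumes "prob_space M" "g \<in> borel_measurable M" "\<forall>x\<in>space M. \<bar>g x\<bar> \<le> B" "a \<ge> 0" "r \<ge> 0"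
  shows "(\<integral>\<^sup>+ x. ennreal (\<bar>g x\<bar> powr r) \<partial>M)
    \<le> ennreal (a powr r + B powr r * measure M {x\<in>space M. a < \<bar>g x\<bar>})"
proof -
  interpret prob_space M by fact
  define S where "S = {x\<in>space M. a < \<bar>g x\<bar>}"
  have S: "S \<in> sets M"
    using assms(2) unfolding S_def by measurable
  have "(\<integral>\<^sup>+ x. ennreal (\<bar>g x\<bar> powr r) \<partial>M)
      \<le> (\<integral>\<^sup>+ x. ennreal (a powr r) + ennreal (B powr r) * indicator S x \<partial>M)"
  proof (rule nn_integral_mono)
    fix x assume x: "x \<in> space M"
    show "ennreal (\<bar>g x\<bar> powr r) \<le> ennreal (a powr r) + ennreal (B powr r) * indicator S x"
    proof (cases "x \<in> S")
      case True
      have "\<bar>g x\<bar> powr r \<le> a powr r + B powr r"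
        using assms(3,5) x by (intro add_increasing powr_mono2) auto
      then show ?thesis
        using True by (simp flip: ennreal_plus)
    next
      case False
      then have "\<bar>g x\<bar> powr r \<le> a powr r"
        using assms(5) x by (intro powr_mono2) (auto simp: S_def)
      then show ?thesis
        using False by (simp add: ennreal_leI)
    qed
  qed
  also have "\<dots> = ennreal (a powr r + B powr r * measure M S)"
    using S by (simp add: nn_integral_add nn_integral_cmult_indicator emeasure_eq_measure
        prob_space ennreal_mult ennreal_plus)
  finally show ?thesis
    by (simp add: S_def)
qed

lemma lp_norm_le_if_small_in_measure:
  assumes "1 \<le> p" "p < \<infinity>" "B \<ge> 0" "K > 0"
  obtains \<epsilon> where "\<epsilon> > 0" "\<And>(M::'a measure) g. prob_space M \<Longrightarrow> g \<in> borel_measurable M \<Longrightarrow>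
     \<forall>x\<in>space M. \<bar>g x\<bar> \<le> B \<Longrightarrow> measure M {x\<in>space M. \<epsilon> < \<bar>g x\<bar>} \<le> \<epsilon> \<Longrightarrow>
     lp_norm M p g \<le> ennreal K"
proof -
  define r where "r = enn2real p"
  have r1: "1 \<le> r"
    using enn2real_ge_1 assms(1,2) by (simp add: r_def)
  define \<epsilon> where "\<epsilon> = min 1 (K powr r / (1 + B powr r))"
  have \<epsilon>: "0 < \<epsilon>" "\<epsilon> \<le> 1" "\<epsilon> * (1 + B powr r) \<le> K powr r"
    using assms(4) by (auto simp: \<epsilon>_def min_mult_distrib_right add_pos_nonneg)
  show ?thesis
  proof (rule that[OF \<epsilon>(1)])
    fix M :: "'a measure" and g
    assume M: "prob_space M" and g: "g \<in> borel_measurable M" "\<forall>x\<in>space M. \<bar>g x\<bar> \<le> B"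
      and small: "measure M {x\<in>space M. \<epsilon> < \<bar>g x\<bar>} \<le> \<epsilon>"
    have "\<epsilon> powr r \<le> \<epsilon> powr 1"
      using \<epsilon> r1 by (intro powr_mono') auto
    moreover have "B powr r * measure M {x\<in>space M. \<epsilon> < \<bar>g x\<bar>} \<le> B powr r * \<epsilon>"
      using small by (intro mult_left_mono) auto
    ultimately have "\<epsilon> powr r + B powr r * measure M {x\<in>space M. \<epsilon> < \<bar>g x\<bar>} \<le> \<epsilon> * (1 + B powr r)"
      using \<epsilon>(1) by (simp add: algebra_simps)
    then have "\<epsilon> powr r + B powr r * measure M {x\<in>space M. \<epsilon> < \<bar>g x\<bar>} \<le> K powr r"
      using \<epsilon>(3) by linarith
    then have "(\<integral>\<^sup>+ x. ennreal (\<bar>g x\<bar> powr r) \<partial>M) \<le> ennreal (K powr r)"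
      using nn_integral_powr_le_split[OF M g, of \<epsilon> r] \<epsilon>(1) r1
      by (auto simp del: ennreal_plus intro: order_trans ennreal_leI)
    then show "lp_norm M p g \<le> ennreal K"
      using assms by (intro lp_norm_le_if_nn_integral_le) (auto simp: r_def)
  qed
qed

section \<open>P-operators\<close>

lemma P_operator_prob_space: "P_operator M A \<Longrightarrow> prob_space M"
  by (simp add: P_operator_def)

lemma P_operator_measurable: "P_operator M A \<Longrightarrow> bounded_meas M v \<Longrightarrow> A v \<in> borel_measurable M"
  by (auto simp: P_operator_def)

lemma P_operator_linear:
  "P_operator M A \<Longrightarrow> bounded_meas M v \<Longrightarrow> bounded_meas M w \<Longrightarrow>
    AE x in M. A (\<lambda>y. a * v y + b * w y) x = a * A v x + b * A w x"
  by (auto simp: P_operator_def)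

lemma P_operator_AE_cong:
  "P_operator M A \<Longrightarrow> bounded_meas M v \<Longrightarrow> bounded_meas M w \<Longrightarrow>
    AE x in M. v x = w x \<Longrightarrow> AE x in M. A v x = A w x"
  by (auto simp: P_operator_def)

lemma bounded_measI: "v \<in> borel_measurable M \<Longrightarrow> (\<And>x. x \<in> space M \<Longrightarrow> \<bar>v x\<bar> \<le> C) \<Longrightarrow> bounded_meas M v"
  by (auto simp: bounded_meas_def)

lemma bounded_meas_const: "bounded_meas M (\<lambda>_. c)"
  by (auto simp: bounded_meas_def)

lemma P_operator_AE_zero:
  assumes "P_operator M A" "bounded_meas M v" "AE x in M. v x = 0"
  shows "AE x in M. A v x = 0"
proof -
  have "AE x in M. A v x = A (\<lambda>_. 0) x"
    using P_operator_AE_cong[OF assms(1,2) bounded_meas_const assms(3)] .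
  moreover have "AE x in M. A (\<lambda>y. 0 * 0 + 0 * 0) x = 0 * A (\<lambda>_. 0) x + 0 * A (\<lambda>_. 0) x"
    by (rule P_operator_linear[OF assms(1) bounded_meas_const bounded_meas_const])
  ultimately show ?thesis
    by eventually_elim simp
qed

lemma bounded_meas_scale: "bounded_meas M v \<Longrightarrow> bounded_meas M (\<lambda>y. a * v y)"
  unfolding bounded_meas_def by (auto simp: abs_mult intro!: exI mult_left_mono)

lemma P_operator_scale:
  "P_operator M A \<Longrightarrow> bounded_meas M v \<Longrightarrow> AE x in M. A (\<lambda>y. a * v y) x = a * A v x"
  using P_operator_linear[of M A v v a 0] by simp

lemma lp_norm_P_operator_le:
  assumes A: "P_operator M A" "op_norm M A p q \<le> ennreal C" and p: "1 \<le> p" "p < \<infinity>"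
    and v: "bounded_meas M v" "lp_norm M p v \<noteq> \<infinity>"
  shows "lp_norm M q (A v) \<le> ennreal C * lp_norm M p v"
proof (cases "lp_norm M p v = 0")
  case True
  then have "AE x in M. v x = 0"
    using AE_zero_if_lp_norm_eq_0 p v(1) by (auto simp: bounded_meas_def)
  then have "lp_norm M q (A v) = 0"
    using lp_norm_eq_0_if_AE_zero P_operator_AE_zero[OF A(1) v(1)] P_operator_measurable[OF A(1) v(1)]
    by blast
  then show ?thesis
    by simp
next
  case False
  have "lp_norm M q (A v) / lp_norm M p v \<le> op_norm M A p q"
    unfolding op_norm_def using v(1) False by (intro SUP_upper) auto
  then have "lp_norm M q (A v) / lp_norm M p v * lp_norm M p v \<le> ennreal C * lp_norm M p v"
    using A(2) by (intro mult_right_mono) auto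
  then show ?thesis
    using False v(2) by (simp add: ennreal_divide_times top.not_eq_extremum)
qed

lemma P_operator_uniformly_continuous_in_measure:
  assumes "1 \<le> p" "p < \<infinity>" "1 \<le> q" "B \<ge> 0" "C > 0" "t > 0" "\<eta> > 0"
  obtains \<epsilon> where "\<epsilon> > 0" "\<And>(M::'a measure) A g. P_operator M A \<Longrightarrow> op_norm M A p q \<le> ennreal C \<Longrightarrow>
     g \<in> borel_measurable M \<Longrightarrow> \<forall>x\<in>space M. \<bar>g x\<bar> \<le> B \<Longrightarrow>
     measure M {x\<in>space M. \<epsilon> < \<bar>g x\<bar>} \<le> \<epsilon> \<Longrightarrow> measure M {x\<in>space M. t \<le> \<bar>A g x\<bar>} < \<eta>"
proof -
  obtain K where K: "K > 0" and chebyshev: "\<And>(M::'a measure) f. prob_space M \<Longrightarrow>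
      f \<in> borel_measurable M \<Longrightarrow> lp_norm M q f \<le> ennreal K \<Longrightarrow> measure M {x\<in>space M. t \<le> \<bar>f x\<bar>} < \<eta>"
    using measure_abs_ge_less_if_lp_norm_le[OF assms(3,6,7)] by blast
  obtain \<epsilon> where \<epsilon>: "\<epsilon> > 0" and small: "\<And>(M::'a measure) g. prob_space M \<Longrightarrow> g \<in> borel_measurable M \<Longrightarrow>
      \<forall>x\<in>space M. \<bar>g x\<bar> \<le> B \<Longrightarrow> measure M {x\<in>space M. \<epsilon> < \<bar>g x\<bar>} \<le> \<epsilon> \<Longrightarrow> lp_norm M p g \<le> ennreal (K / C)"
    using lp_norm_le_if_small_in_measure[OF assms(1,2,4), of "K / C"] K assms(5) by auto
  show ?thesis
  proof (rule that[OF \<epsilon>])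
    fix M :: "'a measure" and A g
    assume A: "P_operator M A" "op_norm M A p q \<le> ennreal C"
      and g: "g \<in> borel_measurable M" "\<forall>x\<in>space M. \<bar>g x\<bar> \<le> B"
      and g_small: "measure M {x\<in>space M. \<epsilon> < \<bar>g x\<bar>} \<le> \<epsilon>"
    have M: "prob_space M"
      using A(1) by (rule P_operator_prob_space)
    have g_bounded: "bounded_meas M g"
      using g by (auto intro: bounded_measI)
    have g_norm: "lp_norm M p g \<le> ennreal (K / C)"
      using small[OF M g g_small] .
    then have "lp_norm M p g \<noteq> \<infinity>"
      using ennreal_less_top[of "K / C"] by (auto simp: top_unique)
    then have "lp_norm M q (A g) \<le> ennreal C * lp_norm M p g"
      using lp_norm_P_operator_le[OF A assms(1,2) g_bounded] by blast
    also have "\<dots> \<le> ennreal C * ennreal (K / C)"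
      using g_norm by (rule mult_left_mono) simp
    also have "\<dots> = ennreal K"
      using assms(5) K by (simp flip: ennreal_mult)
    finally show "measure M {x\<in>space M. t \<le> \<bar>A g x\<bar>} < \<eta>"
      using chebyshev[OF M P_operator_measurable[OF A(1) g_bounded]] by blast
  qed
qed

section \<open>Joint laws and the Levy--Prokhorov distance\<close>

definition unit_valued :: "'a measure \<Rightarrow> ('a \<Rightarrow> real) \<Rightarrow> bool" where
  "unit_valued M v \<longleftrightarrow> v \<in> borel_measurable M \<and> (\<forall>x\<in>space M. v x \<in> {-1..1})"

lemma bounded_meas_if_unit_valued: "unit_valued M v \<Longrightarrow> bounded_meas M v"
  unfolding unit_valued_def by (intro bounded_measI[of _ _ 1]) auto

definition graph_distr :: "'a measure \<Rightarrow> (('a \<Rightarrow> real) \<Rightarrow> ('a \<Rightarrow> real)) \<Rightarrow> ('a \<Rightarrow> real) \<Rightarrow> (nat \<Rightarrow> real) measure" where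
  "graph_distr M A v = distr M (Rn 2) (\<lambda>x. \<lambda>j\<in>{..<2}. if j < 1 then v x else A v x)"

lemma graph_distr_in_S_k: "unit_valued M v \<Longrightarrow> graph_distr M A v \<in> S_k M A 1"
  unfolding S_k_def graph_distr_def unit_valued_def by (auto intro!: exI[of _ "\<lambda>_. v"])

lemma S_k_1_obtains_graph_distr:
  assumes "\<mu> \<in> S_k M A 1"
  obtains v where "unit_valued M v" "\<mu> = graph_distr M A v"
proof -
  obtain v where v: "\<forall>j<1. v j \<in> borel_measurable M \<and> (\<forall>x\<in>space M. v j x \<in> {-1..1})"
    and \<mu>: "\<mu> = distr M (Rn 2) (\<lambda>x. \<lambda>j\<in>{..<2}. if j < 1 then v j x else A (v (j - 1)) x)"
    using assms unfolding S_k_def by auto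
  have "(\<lambda>x. \<lambda>j\<in>{..<2::nat}. if j < 1 then v j x else A (v (j - 1)) x)
      = (\<lambda>x. \<lambda>j\<in>{..<2}. if j < 1 then v 0 x else A (v 0) x)"
    by (intro ext restrict_ext) (auto simp: less_2_cases_iff)
  then show ?thesis
    using v \<mu> by (intro that[of "v 0"]) (auto simp: unit_valued_def graph_distr_def)
qed

lemma S_k_nonempty: "S_k M A k \<noteq> {}"
  unfolding S_k_def by (auto intro!: exI[of _ "\<lambda>_ _. 0"])

lemma prob_space_if_in_S_k:
  assumes A: "P_operator M A" and \<mu>: "\<mu> \<in> S_k M A k"
  shows "prob_space \<mu>"
proof -
  obtain v where v: "\<forall>j<k. unit_valued M (v j)"
    and \<mu>_eq: "\<mu> = distr M (Rn (2 * k)) (\<lambda>x. \<lambda>j\<in>{..<2 * k}. if j < k then v j x else A (v (j - k)) x)"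
    using \<mu> unfolding S_k_def unit_valued_def by blast
  have "(\<lambda>x. \<lambda>j\<in>{..<2 * k}. if j < k then v j x else A (v (j - k)) x) \<in> M \<rightarrow>\<^sub>M Rn (2 * k)"
  proof (rule measurable_restrict)
    fix j assume "j \<in> {..<2 * k}"
    then have "unit_valued M (v (if j < k then j else j - k))"
      using v by auto
    then show "(\<lambda>x. if j < k then v j x else A (v (j - k)) x) \<in> borel_measurable M"
      using P_operator_measurable[OF A] bounded_meas_if_unit_valued
      by (cases "j < k") (auto simp: unit_valued_def)
  qed
  then show ?thesis
    unfolding \<mu>_eq using P_operator_prob_space[OF A] by (intro prob_space.prob_space_distr) auto
qed

lemma measure_graph_distr:
  assumes A: "P_operator M A" and v: "bounded_meas M v"
    and S: "{z\<in>space (Rn 2). Q (z 0) (z 1)} \<in> sets (Rn 2)"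
  shows "measure (graph_distr M A v) {z\<in>space (Rn 2). Q (z 0) (z 1)} = measure M {x\<in>space M. Q (v x) (A v x)}"
proof -
  let ?f = "\<lambda>x. \<lambda>j\<in>{..<2::nat}. if j < 1 then v x else A v x"
  have f: "?f \<in> M \<rightarrow>\<^sub>M Rn 2"
    using v P_operator_measurable[OF A v] by (intro measurable_restrict) (auto simp: bounded_meas_def)
  have "measure (graph_distr M A v) {z\<in>space (Rn 2). Q (z 0) (z 1)}
      = measure M (?f -` {z\<in>space (Rn 2). Q (z 0) (z 1)} \<inter> space M)"
    unfolding graph_distr_def by (rule measure_distr[OF f S])
  also have "?f -` {z\<in>space (Rn 2). Q (z 0) (z 1)} \<inter> space M = {x\<in>space M. Q (v x) (A v x)}"
    using measurable_space[OF f] by auto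
  finally show ?thesis .
qed

definition lp_close :: "nat \<Rightarrow> real \<Rightarrow> (nat \<Rightarrow> real) measure \<Rightarrow> (nat \<Rightarrow> real) measure \<Rightarrow> bool" where
  "lp_close n e \<mu> \<nu> \<longleftrightarrow> (\<forall>B\<in>sets (Rn n).
      measure \<mu> B \<le> measure \<nu> (thick n e B) + e \<and> measure \<nu> B \<le> measure \<mu> (thick n e B) + e)"

lemma lp_dist_eq_Inf_lp_close: "lp_dist n \<mu> \<nu> = Inf {e. e > 0 \<and> lp_close n e \<mu> \<nu>}"
  by (simp add: lp_dist_def lp_close_def)

lemma lp_close_commute: "lp_close n e \<mu> \<nu> \<longleftrightarrow> lp_close n e \<nu> \<mu>"
  by (auto simp: lp_close_def)

lemma lp_close_1: "prob_space \<mu> \<Longrightarrow> prob_space \<nu> \<Longrightarrow> lp_close n 1 \<mu> \<nu>"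
  by (auto simp: lp_close_def prob_space.prob_le_1 add_increasing)

lemma lp_dist_commute: "lp_dist n \<mu> \<nu> = lp_dist n \<nu> \<mu>"
  by (simp add: lp_dist_eq_Inf_lp_close lp_close_commute)

lemma lp_dist_nonneg: "prob_space \<mu> \<Longrightarrow> prob_space \<nu> \<Longrightarrow> 0 \<le> lp_dist n \<mu> \<nu>"
  unfolding lp_dist_eq_Inf_lp_close using lp_close_1[of \<mu> \<nu> n] by (intro cInf_greatest) (auto intro: exI[of _ 1])

lemma lp_dist_le_1: "prob_space \<mu> \<Longrightarrow> prob_space \<nu> \<Longrightarrow> lp_dist n \<mu> \<nu> \<le> 1"
  unfolding lp_dist_eq_Inf_lp_close using lp_close_1 by (intro cInf_lower) (auto intro: bdd_belowI[of _ 0])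

lemma lp_close_if_lp_dist_less:
  assumes "prob_space \<mu>" "prob_space \<nu>" "lp_dist n \<mu> \<nu> < \<epsilon>"
  obtains e where "0 < e" "e < \<epsilon>" "lp_close n e \<mu> \<nu>"
proof -
  have "{e. e > 0 \<and> lp_close n e \<mu> \<nu>} \<noteq> {}"
    using lp_close_1[OF assms(1,2)] by (auto intro: exI[of _ 1])
  then show ?thesis
    using cInf_lessD[OF _ assms(3)[unfolded lp_dist_eq_Inf_lp_close]] that by blast
qed

lemma INF_lp_dist_bounds:
  assumes "Y \<noteq> {}" "\<forall>\<nu>\<in>Y. prob_space \<nu>" "prob_space \<mu>"
  shows "0 \<le> (INF \<nu>\<in>Y. lp_dist n \<mu> \<nu>)" "(INF \<nu>\<in>Y. lp_dist n \<mu> \<nu>) \<le> 1"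
proof -
  show "0 \<le> (INF \<nu>\<in>Y. lp_dist n \<mu> \<nu>)"
    using assms by (intro cINF_greatest lp_dist_nonneg) auto
  obtain \<nu> where \<nu>: "\<nu> \<in> Y"
    using assms(1) by blast
  have "(INF \<nu>\<in>Y. lp_dist n \<mu> \<nu>) \<le> lp_dist n \<mu> \<nu>"
    using assms \<nu> by (intro cINF_lower bdd_belowI2[where m=0] lp_dist_nonneg) auto
  also have "\<dots> \<le> 1"
    using assms \<nu> by (intro lp_dist_le_1) auto
  finally show "(INF \<nu>\<in>Y. lp_dist n \<mu> \<nu>) \<le> 1" .
qed

lemma hausdorff_lp_bounds:
  assumes "X \<noteq> {}" "Y \<noteq> {}" "\<forall>\<mu>\<in>X. prob_space \<mu>" "\<forall>\<nu>\<in>Y. prob_space \<nu>"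
  shows "0 \<le> hausdorff_lp n X Y" "hausdorff_lp n X Y \<le> 1"
proof -
  have left: "0 \<le> (INF \<nu>\<in>Y. lp_dist n \<mu> \<nu>) \<and> (INF \<nu>\<in>Y. lp_dist n \<mu> \<nu>) \<le> 1" if "\<mu> \<in> X" for \<mu>
    using INF_lp_dist_bounds[OF assms(2,4)] assms(3) that by blast
  have right: "0 \<le> (INF \<mu>\<in>X. lp_dist n \<mu> \<nu>) \<and> (INF \<mu>\<in>X. lp_dist n \<mu> \<nu>) \<le> 1" if "\<nu> \<in> Y" for \<nu>
    using INF_lp_dist_bounds[OF assms(1,3), of \<nu> n] assms(4) that
    unfolding lp_dist_commute[of n \<nu>] by blast
  obtain \<mu> where \<mu>: "\<mu> \<in> X"
    using assms(1) by blast
  have "0 \<le> (INF \<nu>\<in>Y. lp_dist n \<mu> \<nu>)"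
    using left \<mu> by blast
  also have "\<dots> \<le> (SUP \<mu>\<in>X. INF \<nu>\<in>Y. lp_dist n \<mu> \<nu>)"
    using left \<mu> by (intro cSUP_upper bdd_aboveI2[where M=1]) auto
  finally show "0 \<le> hausdorff_lp n X Y"
    by (simp add: hausdorff_lp_def)
  show "hausdorff_lp n X Y \<le> 1"
    unfolding hausdorff_lp_def using left right assms(1,2) by (auto intro!: cSUP_least)
qed

lemma hausdorff_lp_less_obtains:
  assumes "X \<noteq> {}" "\<forall>\<mu>\<in>X. prob_space \<mu>" "\<forall>\<nu>\<in>Y. prob_space \<nu>"
    and "hausdorff_lp n X Y < \<epsilon>" "\<nu> \<in> Y"
  obtains \<mu> where "\<mu> \<in> X" "lp_dist n \<mu> \<nu> < \<epsilon>"
proof -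
  have bounds: "0 \<le> (INF \<mu>\<in>X. lp_dist n \<mu> \<nu>') \<and> (INF \<mu>\<in>X. lp_dist n \<mu> \<nu>') \<le> 1" if "\<nu>' \<in> Y" for \<nu>'
    using INF_lp_dist_bounds[OF assms(1,2), of \<nu>' n] assms(3) that
    unfolding lp_dist_commute[of n \<nu>'] by blast
  have "(INF \<mu>\<in>X. lp_dist n \<mu> \<nu>) \<le> (SUP \<nu>\<in>Y. INF \<mu>\<in>X. lp_dist n \<mu> \<nu>)"
    using assms(5) bounds by (intro cSUP_upper bdd_aboveI2[where M=1]) auto
  then have "(INF \<mu>\<in>X. lp_dist n \<mu> \<nu>) < \<epsilon>"
    using assms(4) by (simp add: hausdorff_lp_def)
  moreover have "bdd_below ((\<lambda>\<mu>. lp_dist n \<mu> \<nu>) ` X)"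
    using assms by (intro bdd_belowI2[where m=0] lp_dist_nonneg) auto
  ultimately show ?thesis
    using that assms(1) by (subst (asm) cINF_less_iff) auto
qed

lemma hausdorff_lp_S_k_bounds:
  assumes "P_operator M A" "P_operator N B"
  shows "0 \<le> hausdorff_lp n (S_k M A k) (S_k N B k)" "hausdorff_lp n (S_k M A k) (S_k N B k) \<le> 1"
  using hausdorff_lp_bounds[OF S_k_nonempty S_k_nonempty, of M A k N B k n]
    prob_space_if_in_S_k[OF assms(1)] prob_space_if_in_S_k[OF assms(2)] by blast+

lemma hausdorff_lp_S_k_1_le_action_dist:
  assumes "P_operator M A" "P_operator N B"
  shows "hausdorff_lp 2 (S_k M A 1) (S_k N B 1) \<le> 2 * action_dist M A N B"
proof -
  define f where "f k = (1/2) ^ Suc k * hausdorff_lp (2 * Suc k) (S_k M A (Suc k)) (S_k N B (Suc k))" for k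
  have f_nonneg: "0 \<le> f k" for k
    using hausdorff_lp_S_k_bounds[OF assms] by (simp add: f_def)
  have "summable f"
  proof (rule summable_comparison_test[OF _ summable_geometric[of "1/2"]])
    have "norm (f k) \<le> (1/2) ^ k" for k
    proof -
      have "f k \<le> (1/2) ^ Suc k"
        using hausdorff_lp_S_k_bounds[OF assms] by (simp add: f_def mult_left_le)
      then show ?thesis
        using f_nonneg[of k] by simp
    qed
    then show "\<exists>N. \<forall>k\<ge>N. norm (f k) \<le> (1/2) ^ k"
      by blast
  qed simp
  then have "f 0 \<le> suminf f"
    using sum_le_suminf[of f "{0}"] f_nonneg by simp
  moreover have "action_dist M A N B = suminf f"
    unfolding f_def action_dist_def ..
  moreover have "f 0 = hausdorff_lp 2 (S_k M A 1) (S_k N B 1) / 2"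
    by (simp add: f_def)
  ultimately show ?thesis
    by linarith
qed

lemma graph_distr_lp_close_if_action_dist_less:
  assumes A: "P_operator M A" and B: "P_operator N B" and "\<epsilon> > 0"
    and "action_dist M A N B < \<epsilon> / 2" and w: "unit_valued N w"
  obtains v e where "unit_valued M v" "0 < e" "e < \<epsilon>" "lp_close 2 e (graph_distr M A v) (graph_distr N B w)"
proof -
  have w_law: "graph_distr N B w \<in> S_k N B 1"
    using graph_distr_in_S_k[OF w] .
  have "hausdorff_lp 2 (S_k M A 1) (S_k N B 1) < \<epsilon>"
    using hausdorff_lp_S_k_1_le_action_dist[OF A B] assms(4) by simp
  moreover have "\<forall>\<mu>\<in>S_k M A 1. prob_space \<mu>" "\<forall>\<nu>\<in>S_k N B 1. prob_space \<nu>"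
    using prob_space_if_in_S_k[OF A] prob_space_if_in_S_k[OF B] by blast+
  ultimately obtain \<mu> where \<mu>: "\<mu> \<in> S_k M A 1" and "lp_dist 2 \<mu> (graph_distr N B w) < \<epsilon>"
    using hausdorff_lp_less_obtains[OF S_k_nonempty _ _ _ w_law] by blast
  then obtain e where "0 < e" "e < \<epsilon>" "lp_close 2 e \<mu> (graph_distr N B w)"
    using lp_close_if_lp_dist_less[OF prob_space_if_in_S_k[OF A \<mu>] prob_space_if_in_S_k[OF B w_law]]
    by blast
  moreover obtain v where "unit_valued M v" "\<mu> = graph_distr M A v"
    using S_k_1_obtains_graph_distr[OF \<mu>] .
  ultimately show ?thesis
    using that by blast
qed

lemma thick_2_obtains_near:
  assumes "z \<in> thick 2 e S"
  obtains y where "y \<in> S" "z \<in> space (Rn 2)" "\<bar>y 0 - z 0\<bar> < e" "\<bar>y 1 - z 1\<bar> < e"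
proof -
  obtain y where y: "y \<in> S" "z \<in> space (Rn 2)" and "edist 2 y z < e"
    using assms by (auto simp: thick_def)
  then have dist: "sqrt ((y 0 - z 0)\<^sup>2 + (y 1 - z 1)\<^sup>2) < e"
    by (simp add: edist_def numeral_2_eq_2)
  have "\<bar>y 0 - z 0\<bar> \<le> sqrt ((y 0 - z 0)\<^sup>2 + (y 1 - z 1)\<^sup>2)"
    using real_sqrt_sum_squares_ge1[of "\<bar>y 0 - z 0\<bar>"] by simp
  moreover have "\<bar>y 1 - z 1\<bar> \<le> sqrt ((y 0 - z 0)\<^sup>2 + (y 1 - z 1)\<^sup>2)"
    using real_sqrt_sum_squares_ge2[of _ "\<bar>y 1 - z 1\<bar>"] by simp
  ultimately show ?thesis
    using dist by (intro that[OF y]) linarith+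
qed

lemma measure_le_if_lp_close_graph_distr:
  assumes close: "lp_close 2 e (graph_distr M A u) (graph_distr N B w)"
    and A: "P_operator M A" "unit_valued M u" and B: "P_operator N B" "unit_valued N w"
    and Q: "{z\<in>space (Rn 2). Q (z 0) (z 1)} \<in> sets (Rn 2)"
    and Q': "{z\<in>space (Rn 2). Q' (z 0) (z 1)} \<in> sets (Rn 2)"
    and near: "\<And>a b a' b'. Q a b \<Longrightarrow> \<bar>a - a'\<bar> < e \<Longrightarrow> \<bar>b - b'\<bar> < e \<Longrightarrow> Q' a' b'"
  shows "measure M {x\<in>space M. Q (u x) (A u x)} \<le> measure N {x\<in>space N. Q' (w x) (B w x)} + e"
proof -
  let ?S = "{z\<in>space (Rn 2). Q (z 0) (z 1)}" and ?T = "{z\<in>space (Rn 2). Q' (z 0) (z 1)}"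
  interpret B_law: prob_space "graph_distr N B w"
    using prob_space_if_in_S_k[OF B(1) graph_distr_in_S_k[OF B(2)]] .
  have "thick 2 e ?S \<subseteq> ?T"
    by (auto elim!: thick_2_obtains_near intro: near)
  then have "measure (graph_distr N B w) (thick 2 e ?S) \<le> measure (graph_distr N B w) ?T"
    using Q' by (intro B_law.finite_measure_mono) (auto simp: graph_distr_def)
  then have "measure (graph_distr M A u) ?S \<le> measure (graph_distr N B w) ?T + e"
    using close Q unfolding lp_close_def by fastforce
  then show ?thesis
    using measure_graph_distr[OF A(1) bounded_meas_if_unit_valued[OF A(2)] Q]
      measure_graph_distr[OF B(1) bounded_meas_if_unit_valued[OF B(2)] Q'] by simp
qed

section \<open>Constraints preserved under convergence\<close>

lemma (in finite_measure) measure_ge_pos_if_not_AE_le_0: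
  fixes f :: "'a \<Rightarrow> real"
  assumes "f \<in> borel_measurable M" "\<not> (AE x in M. f x \<le> 0)"
  obtains \<delta> where "\<delta> > 0" "measure M {x\<in>space M. \<delta> \<le> f x} > 0"
proof (rule ccontr)
  assume "\<not> thesis"
  then have "measure M {x\<in>space M. inverse (real (Suc n)) \<le> f x} = 0" for n
    using that[of "inverse (real (Suc n))"] measure_nonneg[of M] by (force simp: less_le)
  then have "AE x in M. f x < inverse (real (Suc n))" for n
    using assms(1) by (subst AE_iff_measurable[OF _ refl]) (auto simp: emeasure_eq_measure not_less)
  then have "AE x in M. \<forall>n. f x < inverse (real (Suc n))"
    by (simp add: AE_all_countable)
  then have "AE x in M. f x \<le> 0"
    by eventually_elim (metis not_le reals_Archimedean order.asym)
  then show False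
    using assms(2) by blast
qed

lemma SUP_less_top_obtains_real_bound:
  fixes f :: "'i \<Rightarrow> ennreal"
  assumes "(SUP i. f i) < \<infinity>"
  obtains C :: real where "C > 0" "\<And>i. f i \<le> ennreal C"
proof
  show "enn2real (SUP i. f i) + 1 > 0"
    by (simp add: add_nonneg_pos)
  fix i
  have "f i \<le> (SUP i. f i)"
    by (rule SUP_upper) simp
  also have "\<dots> = ennreal (enn2real (SUP i. f i))"
    using assms by simp
  also have "\<dots> \<le> ennreal (enn2real (SUP i. f i) + 1)"
    by (intro ennreal_leI) simp
  finally show "f i \<le> ennreal (enn2real (SUP i. f i) + 1)" .
qed

lemma action_dist_tendsto_0_obtains_lp_close:
  assumes "\<forall>i. P_operator (M i) (As i)" "P_operator N A"
    and "(\<lambda>i. action_dist (M i) (As i) N A) \<longlonglongrightarrow> 0" "\<epsilon> > 0" "unit_valued N w"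
  obtains i u e where "unit_valued (M i) u" "0 < e" "e < \<epsilon>"
    "lp_close 2 e (graph_distr (M i) (As i) u) (graph_distr N A w)"
proof -
  obtain i where "action_dist (M i) (As i) N A < \<epsilon> / 2"
    using order_tendstoD(2)[OF assms(3), of "\<epsilon> / 2"] assms(4) by (auto simp: eventually_sequentially)
  moreover have "P_operator (M i) (As i)"
    using assms(1) by blast
  ultimately show ?thesis
    using graph_distr_lp_close_if_action_dist_less[OF _ assms(2,4) _ assms(5)] that by blast
qed

locale input_output_constraint =
  fixes W :: "real set" and r :: "real \<Rightarrow> real" and \<rho> :: "real \<Rightarrow> real"
  assumes W_unit: "W \<subseteq> {-1..1}"
    and retract_in: "r u \<in> W"
    and retract_nearest: "x \<in> W \<Longrightarrow> \<bar>u - r u\<bar> \<le> \<bar>u - x\<bar>"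
    and retract_measurable [measurable]: "r \<in> borel_measurable borel"
    and defect_lipschitz: "1-lipschitz_on UNIV \<rho>"
begin

definition obeys :: "'a measure \<Rightarrow> (('a \<Rightarrow> real) \<Rightarrow> ('a \<Rightarrow> real)) \<Rightarrow> bool" where
  "obeys M A \<longleftrightarrow> (\<forall>h. h \<in> borel_measurable M \<longrightarrow> (\<forall>x\<in>space M. h x \<in> W) \<longrightarrow> (AE x in M. \<rho> (A h x) \<le> 0))"

lemma defect_le: "\<rho> a \<le> \<rho> b + \<bar>a - b\<bar>"
  using lipschitz_onD[OF defect_lipschitz, of a b] by (simp add: dist_real_def)

lemma defect_measurable [measurable]: "\<rho> \<in> borel_measurable borel"
  using lipschitz_on_continuous_on[OF defect_lipschitz] by (rule borel_measurable_continuous_onI)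

lemma retract_eq: "x \<in> W \<Longrightarrow> r x = x"
  using retract_nearest[of x x] by simp

lemma retract_dist_le: "\<bar>a - r a\<bar> \<le> \<bar>a - b\<bar> + \<bar>b - r b\<bar>"
  using retract_nearest[OF retract_in, of a b] by linarith

lemma abs_retract_le_1: "\<bar>r u\<bar> \<le> 1"
  using W_unit retract_in[of u] by (auto simp: abs_le_iff)

lemma retract_comp_bounded_meas: "unit_valued M u \<Longrightarrow> bounded_meas M (\<lambda>x. r (u x))"
  by (intro bounded_measI[of _ _ 1] abs_retract_le_1 measurable_compose[OF _ retract_measurable])
    (simp add: unit_valued_def)

lemma retract_dist_comp:
  assumes "unit_valued M u"
  shows "(\<lambda>x. u x - r (u x)) \<in> borel_measurable M" "\<forall>x\<in>space M. \<bar>u x - r (u x)\<bar> \<le> 2"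
proof -
  have [measurable]: "u \<in> borel_measurable M"
    using assms by (simp add: unit_valued_def)
  show "(\<lambda>x. u x - r (u x)) \<in> borel_measurable M"
    by measurable
  have "\<bar>u x - r (u x)\<bar> \<le> 2" if "x \<in> space M" for x
    using assms that abs_retract_le_1[of "u x"] by (auto simp: unit_valued_def)
  then show "\<forall>x\<in>space M. \<bar>u x - r (u x)\<bar> \<le> 2"
    by blast
qed

lemma defect_P_operator_le:
  assumes A: "P_operator M A" "obeys M A" and u: "unit_valued M u"
  shows "AE x in M. \<rho> (A u x) \<le> \<bar>A (\<lambda>y. u y - r (u y)) x\<bar>"
proof -
  have r_u: "bounded_meas M (\<lambda>y. r (u y))"
    using retract_comp_bounded_meas[OF u] .
  have g: "bounded_meas M (\<lambda>y. u y - r (u y))"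
    using retract_dist_comp[OF u] by (intro bounded_measI[of _ _ 2]) auto
  have "AE x in M. A u x = A (\<lambda>y. r (u y)) x + A (\<lambda>y. u y - r (u y)) x"
    using P_operator_linear[OF A(1) r_u g, of 1 1] by simp
  moreover have "AE x in M. \<rho> (A (\<lambda>y. r (u y)) x) \<le> 0"
    using A(2) r_u retract_in by (simp add: obeys_def bounded_meas_def)
  ultimately show ?thesis
  proof eventually_elim
    case (elim x)
    then show ?case
      using defect_le[of "A u x" "A (\<lambda>y. r (u y)) x"] by linarith
  qed
qed

lemma obeys_nearly:
  assumes "1 \<le> p" "p < \<infinity>" "1 \<le> q" "C > 0" "t > 0" "\<eta> > 0"
  obtains \<epsilon> where "\<epsilon> > 0" "\<And>(M::'a measure) A u. P_operator M A \<Longrightarrow> op_norm M A p q \<le> ennreal C \<Longrightarrow>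
     obeys M A \<Longrightarrow> unit_valued M u \<Longrightarrow> measure M {x\<in>space M. \<epsilon> \<le> \<bar>u x - r (u x)\<bar>} \<le> \<epsilon> \<Longrightarrow>
     measure M {x\<in>space M. t < \<rho> (A u x)} < \<eta>"
proof -
  obtain \<epsilon> where \<epsilon>: "\<epsilon> > 0" and small: "\<And>(M::'a measure) A g. P_operator M A \<Longrightarrow>
      op_norm M A p q \<le> ennreal C \<Longrightarrow> g \<in> borel_measurable M \<Longrightarrow> \<forall>x\<in>space M. \<bar>g x\<bar> \<le> 2 \<Longrightarrow>
      measure M {x\<in>space M. \<epsilon> < \<bar>g x\<bar>} \<le> \<epsilon> \<Longrightarrow> measure M {x\<in>space M. t \<le> \<bar>A g x\<bar>} < \<eta>"
    using P_operator_uniformly_continuous_in_measure[OF assms(1-3) _ assms(4-6), of 2] by auto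
  show ?thesis
  proof (rule that[OF \<epsilon>])
    fix M :: "'a measure" and A u
    assume A: "P_operator M A" "op_norm M A p q \<le> ennreal C" "obeys M A" and u: "unit_valued M u"
      and u_near: "measure M {x\<in>space M. \<epsilon> \<le> \<bar>u x - r (u x)\<bar>} \<le> \<epsilon>"
    interpret prob_space M
      using P_operator_prob_space[OF A(1)] .
    let ?g = "\<lambda>x. u x - r (u x)"
    have "measure M {x\<in>space M. \<epsilon> < \<bar>?g x\<bar>} \<le> measure M {x\<in>space M. \<epsilon> \<le> \<bar>?g x\<bar>}"
      using retract_dist_comp(1)[OF u] by (intro finite_measure_mono) auto
    then have "measure M {x\<in>space M. t \<le> \<bar>A ?g x\<bar>} < \<eta>"
      using small[OF A(1,2) retract_dist_comp[OF u]] u_near by linarith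
    moreover have "A ?g \<in> borel_measurable M"
      using retract_dist_comp[OF u] by (intro P_operator_measurable[OF A(1)] bounded_measI) auto
    then have "measure M {x\<in>space M. t < \<rho> (A u x)} \<le> measure M {x\<in>space M. t \<le> \<bar>A ?g x\<bar>}"
      using defect_P_operator_le[OF A(1,3) u] by (intro finite_measure_mono_AE) (auto elim: eventually_mono)
    ultimately show "measure M {x\<in>space M. t < \<rho> (A u x)} < \<eta>"
      by linarith
  qed
qed

lemma measure_retract_dist_ge_le_if_lp_close:
  assumes close: "lp_close 2 e (graph_distr M A u) (graph_distr N B w)"
    and A: "P_operator M A" "unit_valued M u" and B: "P_operator N B" "unit_valued N w"
    and w: "\<forall>x\<in>space N. w x \<in> W" and "e \<le> \<epsilon>"
  shows "measure M {x\<in>space M. \<epsilon> \<le> \<bar>u x - r (u x)\<bar>} \<le> e"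
proof -
  have "measure M {x\<in>space M. \<epsilon> \<le> \<bar>u x - r (u x)\<bar>}
      \<le> measure N {x\<in>space N. 0 < \<bar>w x - r (w x)\<bar>} + e"
  proof (rule measure_le_if_lp_close_graph_distr[OF close A B,
        where Q = "\<lambda>a _. \<epsilon> \<le> \<bar>a - r a\<bar>" and Q' = "\<lambda>a _. 0 < \<bar>a - r a\<bar>"])
    fix a a' :: real
    assume "\<epsilon> \<le> \<bar>a - r a\<bar>" "\<bar>a - a'\<bar> < e"
    then show "0 < \<bar>a' - r a'\<bar>"
      using retract_dist_le[of a a'] \<open>e \<le> \<epsilon>\<close> by linarith
  qed measurable
  also have "{x\<in>space N. 0 < \<bar>w x - r (w x)\<bar>} = {}"
    using w retract_eq by auto
  finally show ?thesis
    by simp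
qed

lemma measure_defect_ge_le_if_lp_close:
  assumes close: "lp_close 2 e (graph_distr M A u) (graph_distr N B w)"
    and A: "P_operator M A" "unit_valued M u" and B: "P_operator N B" "unit_valued N w"
    and "e \<le> \<delta> / 2"
  shows "measure N {x\<in>space N. \<delta> \<le> \<rho> (B w x)} \<le> measure M {x\<in>space M. \<delta> / 2 < \<rho> (A u x)} + e"
proof (rule measure_le_if_lp_close_graph_distr[OF lp_close_commute[THEN iffD1, OF close] B A,
      where Q = "\<lambda>_ b. \<delta> \<le> \<rho> b" and Q' = "\<lambda>_ b. \<delta> / 2 < \<rho> b"])
  fix b b' :: real
  assume "\<delta> \<le> \<rho> b" "\<bar>b - b'\<bar> < e"
  then show "\<delta> / 2 < \<rho> b'"
    using defect_le[of b b'] \<open>e \<le> \<delta> / 2\<close> by linarith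
qed measurable

lemma obeys_limit:
  fixes M :: "nat \<Rightarrow> 'a measure" and N :: "'b measure"
  assumes p: "1 \<le> p" "p < \<infinity>" and q: "1 \<le> q"
    and ops: "\<forall>i. P_operator (M i) (As i)" "P_operator N A"
    and bounded: "(SUP i. op_norm (M i) (As i) p q) < \<infinity>"
    and lim: "(\<lambda>i. action_dist (M i) (As i) N A) \<longlonglongrightarrow> 0"
    and obey: "\<forall>i. obeys (M i) (As i)"
  shows "obeys N A"
  unfolding obeys_def
proof (intro allI impI)
  fix w assume w: "w \<in> borel_measurable N" "\<forall>x\<in>space N. w x \<in> W"
  interpret N: prob_space N
    using P_operator_prob_space[OF ops(2)] .
  have w_unit: "unit_valued N w"
    using w W_unit by (auto simp: unit_valued_def)
  have [measurable]: "A w \<in> borel_measurable N"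
    using P_operator_measurable[OF ops(2) bounded_meas_if_unit_valued[OF w_unit]] .
  show "AE x in N. \<rho> (A w x) \<le> 0"
  proof (rule ccontr)
    assume "\<not> (AE x in N. \<rho> (A w x) \<le> 0)"
    then obtain \<delta> where \<delta>: "\<delta> > 0" and "measure N {x\<in>space N. \<delta> \<le> \<rho> (A w x)} > 0"
      by (rule N.measure_ge_pos_if_not_AE_le_0[rotated]) measurable
    moreover define \<eta> where "\<eta> = measure N {x\<in>space N. \<delta> \<le> \<rho> (A w x)}"
    ultimately have \<eta>: "\<eta> > 0"
      by simp
    obtain C where C: "C > 0" "\<And>i. op_norm (M i) (As i) p q \<le> ennreal C"
      using SUP_less_top_obtains_real_bound[OF bounded] by blast
    obtain \<epsilon> where \<epsilon>: "\<epsilon> > 0" and nearly: "\<And>(M'::'a measure) A' u. P_operator M' A' \<Longrightarrow>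
        op_norm M' A' p q \<le> ennreal C \<Longrightarrow> obeys M' A' \<Longrightarrow> unit_valued M' u \<Longrightarrow>
        measure M' {x\<in>space M'. \<epsilon> \<le> \<bar>u x - r (u x)\<bar>} \<le> \<epsilon> \<Longrightarrow>
        measure M' {x\<in>space M'. \<delta> / 2 < \<rho> (A' u x)} < \<eta> / 2"
      using obeys_nearly[OF p q C(1), of "\<delta> / 2" "\<eta> / 2"] \<delta> \<eta> by auto
    obtain i u e where u: "unit_valued (M i) u" and e: "0 < e" "e < min \<epsilon> (min (\<delta> / 2) (\<eta> / 2))"
      and close: "lp_close 2 e (graph_distr (M i) (As i) u) (graph_distr N A w)"
      using action_dist_tendsto_0_obtains_lp_close[OF ops lim _ w_unit, of "min \<epsilon> (min (\<delta> / 2) (\<eta> / 2))"]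
        \<epsilon> \<delta> \<eta> by auto
    have Ai: "P_operator (M i) (As i)" "obeys (M i) (As i)"
      using ops(1) obey by blast+
    have "measure (M i) {x\<in>space (M i). \<epsilon> \<le> \<bar>u x - r (u x)\<bar>} \<le> \<epsilon>"
      using measure_retract_dist_ge_le_if_lp_close[OF close Ai(1) u ops(2) w_unit w(2), of \<epsilon>] e by simp
    then have "measure (M i) {x\<in>space (M i). \<delta> / 2 < \<rho> (As i u x)} < \<eta> / 2"
      by (rule nearly[OF Ai(1) C(2) Ai(2) u])
    moreover have "\<eta> \<le> measure (M i) {x\<in>space (M i). \<delta> / 2 < \<rho> (As i u x)} + e"
      unfolding \<eta>_def using measure_defect_ge_le_if_lp_close[OF close Ai(1) u ops(2) w_unit] e by simp
    ultimately show False
      using e by simp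
  qed
qed

end

interpretation positivity: input_output_constraint "{0..1}" "\<lambda>u. min 1 (max 0 u)" uminus
proof
  show "1-lipschitz_on UNIV (uminus :: real \<Rightarrow> real)"
    by (intro lipschitz_onI) (auto simp: dist_real_def)
qed auto

interpretation regularity: input_output_constraint "{1}" "\<lambda>_. 1" "\<lambda>a. \<bar>a - c\<bar>" for c :: real
proof
  show "1-lipschitz_on UNIV (\<lambda>a. \<bar>a - c\<bar>)"
    by (intro lipschitz_onI) (auto simp: dist_real_def)
qed auto

lemma positivity_preserving_iff_obeys:
  assumes A: "P_operator M A"
  shows "positivity_preserving M A \<longleftrightarrow> positivity.obeys M A"
proof
  assume "positivity_preserving M A"
  then show "positivity.obeys M A"
    unfolding positivity_preserving_def positivity.obeys_def
    by (auto intro!: bounded_measI[of _ _ 1])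
next
  assume obeys: "positivity.obeys M A"
  show "positivity_preserving M A"
    unfolding positivity_preserving_def
  proof (intro allI impI)
    fix v assume v: "bounded_meas M v" and v_nonneg: "AE x in M. v x \<ge> 0"
    obtain C where C: "\<forall>x\<in>space M. \<bar>v x\<bar> \<le> C"
      using v by (auto simp: bounded_meas_def)
    define K where "K = max 1 C"
    have K: "K \<ge> 1" "\<forall>x\<in>space M. \<bar>v x\<bar> \<le> K"
      using C by (auto simp: K_def intro: order_trans[OF _ max.cobounded2])
    define w where "w x = min 1 (max 0 (v x / K))" for x
    have w: "w \<in> borel_measurable M" "\<forall>x\<in>space M. w x \<in> {0..1}"
      using v unfolding w_def bounded_meas_def by auto
    have "AE x in M. w x = (1 / K) * v x"
      using v_nonneg AE_space by eventually_elim (use K in \<open>auto simp: w_def divide_le_eq\<close>)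
    moreover have "bounded_meas M w"
      using w by (intro bounded_measI[of _ _ 1]) auto
    ultimately have "AE x in M. A w x = A (\<lambda>y. (1 / K) * v y) x"
      using P_operator_AE_cong[OF A _ bounded_meas_scale[OF v]] by blast
    then have "AE x in M. A w x = (1 / K) * A v x"
      using P_operator_scale[OF A v, of "1 / K"] by eventually_elim simp
    moreover have "AE x in M. - A w x \<le> 0"
      using obeys w unfolding positivity.obeys_def by blast
    ultimately show "AE x in M. A v x \<ge> 0"
      by eventually_elim (use K(1) in \<open>simp add: zero_le_divide_iff\<close>)
  qed
qed

lemma c_regular_iff_obeys:
  assumes A: "P_operator M A"
  shows "c_regular c M A \<longleftrightarrow> regularity.obeys c M A"
proof
  assume "c_regular c M A"
  show "regularity.obeys c M A"
    unfolding regularity.obeys_def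
  proof (intro allI impI)
    fix h :: "'a \<Rightarrow> real"
    assume "h \<in> borel_measurable M" "\<forall>x\<in>space M. h x \<in> {1}"
    then have "AE x in M. A h x = A (\<lambda>_. 1) x"
      by (intro P_operator_AE_cong[OF A] bounded_measI[of _ _ 1] bounded_meas_const) auto
    then show "AE x in M. \<bar>A h x - c\<bar> \<le> 0"
      using \<open>c_regular c M A\<close> unfolding c_regular_def by eventually_elim simp
  qed
next
  assume "regularity.obeys c M A"
  then have "AE x in M. \<bar>A (\<lambda>_. 1) x - c\<bar> \<le> 0"
    unfolding regularity.obeys_def by simp
  then show "c_regular c M A"
    unfolding c_regular_def by eventually_elim simp
qed

theorem proposition3p4:
  fixes M :: "nat \<Rightarrow> 'a measure" and As :: "nat \<Rightarrow> ('a \<Rightarrow> real) \<Rightarrow> 'a \<Rightarrow> real"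
    and N :: "'b measure" and A :: "('b \<Rightarrow> real) \<Rightarrow> 'b \<Rightarrow> real"
    and p q :: ennreal and c :: real
  assumes "1 \<le> p" and "p < \<infinity>" and "1 \<le> q"
    and "\<forall>i. P_operator (M i) (As i)" and "P_operator N A"
    and "(SUP i. op_norm (M i) (As i) p q) < \<infinity>"
    and "(\<lambda>i. action_dist (M i) (As i) N A) \<longlonglongrightarrow> 0"
  shows "((\<forall>i. positivity_preserving (M i) (As i)) \<longrightarrow> positivity_preserving N A)
       \<and> ((\<forall>i. c_regular c (M i) (As i)) \<longrightarrow> c_regular c N A)"
proof (intro conjI impI)
  assume "\<forall>i. positivity_preserving (M i) (As i)"
  then have "\<forall>i. positivity.obeys (M i) (As i)"
    using positivity_preserving_iff_obeys assms(4) by blast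
  then show "positivity_preserving N A"
    using positivity.obeys_limit[OF assms] positivity_preserving_iff_obeys[OF assms(5)] by blast
next
  assume "\<forall>i. c_regular c (M i) (As i)"
  then have "\<forall>i. regularity.obeys c (M i) (As i)"
    using c_regular_iff_obeys assms(4) by blast
  then show "c_regular c N A"
    using regularity.obeys_limit[OF assms] c_regular_iff_obeys[OF assms(5)] by blast
qed

end
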